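(* Assume $a_2\neq 0$, $b_2\neq 0$ and that the $h_k$ are pairwise distinct. With $z_1=qa_1/a_2$ and $y_1,y_2,y_3$ as defined, for all $n\geq k\geq 0$, $$c_{n,k}=\frac{b_2^{\,n-k}}{q^{(n-k)k}}\cdot\frac{(q^{k+1};q)_{n-k}\,(q^ky_1;q)_{n-k}\,(q^ky_2;q)_{n-k}\,(q^ky_3;q)_{n-k}}{(q;q)_{n-k}\,(z_1q^{n+k-1};q)_{n-k}}.$$
   Context: Fix $q\in\mathbb{C}$ with $q\neq 0$ and $|q|\neq 1$. Fix complex parameters $a_1,a_2,b_0,b_1,b_2,s_1,s_2$, put $s_0=-s_1-s_2$, and for $k\geq 0$ define $x_k=b_0+b_1q^k+b_2q^{-k}$, $h_k=a_1q^k+a_2q^{-k}$, $d_k=s_0+s_1q^k+s_2q^{-k}$. Let $g_0=0$ and $g_k=x_{k-1}(h_k-h_0)+d_k$ for $k\geq 1$. Define $c_{n,n}=1$ and $c_{n,k}=\prod_{j=k}^{n-1}\frac{g_{j+1}}{h_n-h_j}$ for $0\leq k<n$ (these are the coefficients of the monic polynomial $u_n(t)=\sum_{k=0}^nc_{n,k}v_k(t)$ in the Newton basis $v_k(t)=\prod_{i=0}^{k-1}(t-x_i)$). Put $z_1=qa_1/a_2$, $z_2=qb_1/b_2$, and let $y_1,y_2,y_3$ be the roots of the cubic with $y_1+y_2+y_3=z_1-\frac{b_0+s_2/a_2}{b_2}$, $y_1y_2+y_1y_3+y_2y_3=\frac{z_2}{q}-\frac{qs_1/a_2+b_0z_1}{b_2}$,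 $y_1y_2y_3=\frac{z_1z_2}{q}$. $(t;q)_k=\prod_{i=0}^{k-1}(1-q^it)$. *)

theory Defs
  imports Complex_Main
begin

definition qpoch :: "complex \<Rightarrow> complex \<Rightarrow> nat \<Rightarrow> complex" where
  "qpoch t q k = (\<Prod>i<k. 1 - q ^ i * t)"

definition xx :: "complex \<Rightarrow> complex \<Rightarrow> complex \<Rightarrow> complex \<Rightarrow> nat \<Rightarrow> complex" where
  "xx q b0 b1 b2 k = b0 + b1 * q ^ k + b2 * inverse (q ^ k)"

definition hh :: "complex \<Rightarrow> complex \<Rightarrow> complex \<Rightarrow> nat \<Rightarrow> complex" where
  "hh q a1 a2 k = a1 * q ^ k + a2 * inverse (q ^ k)"

text \<open>d_k with s_0 = - s_1 - s_2.\<close>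
definition dd :: "complex \<Rightarrow> complex \<Rightarrow> complex \<Rightarrow> nat \<Rightarrow> complex" where
  "dd q s1 s2 k = (- s1 - s2) + s1 * q ^ k + s2 * inverse (q ^ k)"

definition gg :: "complex \<Rightarrow> complex \<Rightarrow> complex \<Rightarrow> complex \<Rightarrow> complex \<Rightarrow> complex
    \<Rightarrow> complex \<Rightarrow> complex \<Rightarrow> nat \<Rightarrow> complex" where
  "gg q a1 a2 b0 b1 b2 s1 s2 k =
     (if k = 0 then 0
      else xx q b0 b1 b2 (k - 1) * (hh q a1 a2 k - hh q a1 a2 0) + dd q s1 s2 k)"

definition cc :: "complex \<Rightarrow> complex \<Rightarrow> complex \<Rightarrow> complex \<Rightarrow> complex \<Rightarrow> complex
    \<Rightarrow> complex \<Rightarrow> complex \<Rightarrow> nat \<Rightarrow> nat \<Rightarrow> complex" where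
  "cc q a1 a2 b0 b1 b2 s1 s2 n k =
     (\<Prod>j\<in>{k..<n}. gg q a1 a2 b0 b1 b2 s1 s2 (j + 1) / (hh q a1 a2 n - hh q a1 a2 j))"

end

theory Submission imports Defs begin

text \<open>Both g_{j+1} and h_n - h_j are Laurent polynomials in q^j that factor completely:
  q^{2j+1} g_{j+1} = a_2 b_2 (1 - q^{j+1}) (1 - q^j y_1)(1 - q^j y_2)(1 - q^j y_3), the cubic
  factor being exactly the one whose roots y_1, y_2, y_3 are prescribed by Vieta's relations,
  and q^n (h_n - h_j) = a_2 (1 - q^{n-j}) (1 - z_1 q^{n+j-1}). Multiplying the quotients
  for j = k, ..., n-1 therefore gives q-Pochhammer symbols, the factors 1 - q^{n-j} appearing
  in reverse order as (q;q)_{n-k}.\<close>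

lemma gg_Suc_factor:
  fixes q a1 a2 b0 b1 b2 s1 s2 y1 y2 y3 :: complex
  assumes "q \<noteq> 0" and "a2 \<noteq> 0" and "b2 \<noteq> 0"
    and e1: "y1 + y2 + y3 = q * a1 / a2 - (b0 + s2 / a2) / b2"
    and e2: "y1 * y2 + y1 * y3 + y2 * y3
             = (q * b1 / b2) / q - (q * s1 / a2 + b0 * (q * a1 / a2)) / b2"
    and e3: "y1 * y2 * y3 = (q * a1 / a2) * (q * b1 / b2) / q"
  shows "gg q a1 a2 b0 b1 b2 s1 s2 (Suc j) * q ^ (2 * j + 1)
      = a2 * b2 * (1 - q ^ Suc j) * (1 - q ^ j * y1) * (1 - q ^ j * y2) * (1 - q ^ j * y3)"
proof -
  define Q where "Q = q ^ j"
  have "Q \<noteq> 0" using \<open>q \<noteq> 0\<close> by (simp add: Q_def)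
  have powers: "q ^ Suc j = q * Q" "q ^ (2 * j + 1) = q * Q * Q"
    by (simp_all add: Q_def mult_2 power_add)
  have cubic: "(1 - Q * y1) * (1 - Q * y2) * (1 - Q * y3)
      = 1 - Q * (y1 + y2 + y3) + Q^2 * (y1 * y2 + y1 * y3 + y2 * y3) - Q^3 * (y1 * y2 * y3)"
    by (simp add: algebra_simps power2_eq_square power3_eq_cube)
  have "gg q a1 a2 b0 b1 b2 s1 s2 (Suc j)
      = (b0 + b1 * Q + b2 * inverse Q) * (a1 * q * Q + a2 * inverse q * inverse Q - a1 - a2)
         + ((- s1 - s2) + s1 * q * Q + s2 * inverse q * inverse Q)"
    by (simp add: gg_def xx_def hh_def dd_def Q_def mult_ac)
  then have "gg q a1 a2 b0 b1 b2 s1 s2 (Suc j) * q ^ (2 * j + 1)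
      = ((b0 + b1 * Q + b2 * inverse Q) * (a1 * q * Q + a2 * inverse q * inverse Q - a1 - a2)
         + ((- s1 - s2) + s1 * q * Q + s2 * inverse q * inverse Q)) * (q * Q * Q)"
    by (simp only: powers)
  also have "\<dots> = a2 * b2 * (1 - q * Q) * (1 - Q * (y1 + y2 + y3)
      + Q^2 * (y1 * y2 + y1 * y3 + y2 * y3) - Q^3 * (y1 * y2 * y3))"
    unfolding e1 e2 e3 using assms \<open>Q \<noteq> 0\<close>
    by (simp add: field_simps power2_eq_square power3_eq_cube)
  also have "\<dots> = a2 * b2 * (1 - q * Q) * ((1 - Q * y1) * (1 - Q * y2) * (1 - Q * y3))"
    by (simp only: cubic)
  finally show ?thesis by (simp add: powers(1)[symmetric] Q_def mult_ac)
qed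

lemma hh_diff_factor:
  fixes q a1 a2 :: complex
  assumes "q \<noteq> 0" and "a2 \<noteq> 0" and "j < n"
  shows "(hh q a1 a2 n - hh q a1 a2 j) * q ^ n
      = a2 * (1 - q ^ (n - j)) * (1 - (q * a1 / a2) * q ^ (n + j - 1))"
proof -
  obtain d where n: "n = j + Suc d" using \<open>j < n\<close> less_iff_Suc_add by auto
  define Q where "Q = q ^ j"
  define D where "D = q ^ d"
  have "Q \<noteq> 0" "D \<noteq> 0" using \<open>q \<noteq> 0\<close> by (simp_all add: Q_def D_def)
  have powers: "q ^ j = Q" "q ^ n = Q * D * q" "q ^ (n - j) = D * q" "q ^ (n + j - 1) = Q * Q * D"
    by (simp_all add: n Q_def D_def power_add mult_ac)
  show ?thesis unfolding hh_def powers using assms \<open>Q \<noteq> 0\<close> \<open>D \<noteq> 0\<close>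
    by (simp add: field_simps)
qed

lemma gg_hh_ratio_factor:
  fixes q a1 a2 b0 b1 b2 s1 s2 y1 y2 y3 :: complex
  assumes "q \<noteq> 0" and "a2 \<noteq> 0" and "b2 \<noteq> 0"
    and e1: "y1 + y2 + y3 = q * a1 / a2 - (b0 + s2 / a2) / b2"
    and e2: "y1 * y2 + y1 * y3 + y2 * y3
             = (q * b1 / b2) / q - (q * s1 / a2 + b0 * (q * a1 / a2)) / b2"
    and e3: "y1 * y2 * y3 = (q * a1 / a2) * (q * b1 / b2) / q"
    and "j < n"
  shows "gg q a1 a2 b0 b1 b2 s1 s2 (Suc j) / (hh q a1 a2 n - hh q a1 a2 j)
      = b2 * (q ^ (n - Suc j) / q ^ j)
        * ((1 - q ^ Suc j) * (1 - q ^ j * y1) * (1 - q ^ j * y2) * (1 - q ^ j * y3))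
        / ((1 - q ^ (n - j)) * (1 - (q * a1 / a2) * q ^ (n + j - 1)))"
proof -
  define N where "N = (1 - q ^ Suc j) * (1 - q ^ j * y1) * (1 - q ^ j * y2) * (1 - q ^ j * y3)"
  define D where "D = (1 - q ^ (n - j)) * (1 - (q * a1 / a2) * q ^ (n + j - 1))"
  have g: "gg q a1 a2 b0 b1 b2 s1 s2 (Suc j) = a2 * b2 * N / q ^ (2 * j + 1)"
    using gg_Suc_factor[OF assms(1-6), of j] \<open>q \<noteq> 0\<close> by (simp add: N_def field_simps)
  have h: "hh q a1 a2 n - hh q a1 a2 j = a2 * D / q ^ n"
    using hh_diff_factor[OF assms(1,2,7)] \<open>q \<noteq> 0\<close> by (simp add: D_def field_simps)
  have "n = Suc (n - Suc j + j)" using \<open>j < n\<close> by simp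
  then have "q ^ n = q ^ (n - Suc j) * q ^ j * q"
    by (metis power_Suc2 power_add)
  then have "q ^ n / q ^ (2 * j + 1) = q ^ (n - Suc j) / q ^ j"
    using \<open>q \<noteq> 0\<close> by (simp add: mult_2 power_add)
  then show ?thesis
    unfolding g h N_def[symmetric] D_def[symmetric] using \<open>q \<noteq> 0\<close> \<open>a2 \<noteq> 0\<close>
    by (cases "D = 0") (simp_all add: field_simps)
qed

lemma cc_eq_prod_lessThan:
  assumes "k \<le> n"
  shows "cc q a1 a2 b0 b1 b2 s1 s2 n k
      = (\<Prod>i<n - k. gg q a1 a2 b0 b1 b2 s1 s2 (Suc (k + i)) / (hh q a1 a2 n - hh q a1 a2 (k + i)))"
  unfolding cc_def
  using prod.shift_bounds_nat_ivl[of "\<lambda>j. gg q a1 a2 b0 b1 b2 s1 s2 (j + 1) / (hh q a1 a2 n - hh q a1 a2 j)" 0 k "n - k"]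
    assms
  by (simp add: atLeast0LessThan add.commute)

lemma prod_power_diff_over_power:
  fixes q :: "'a :: field"
  assumes "q \<noteq> 0"
  shows "(\<Prod>i<m. q ^ (m - Suc i) / q ^ (k + i)) = 1 / q ^ (m * k)"
proof -
  have "(\<Prod>i<m. q ^ (m - Suc i) / q ^ (k + i))
      = (\<Prod>i<m. q ^ i) / ((\<Prod>i<m. q ^ k) * (\<Prod>i<m. q ^ i))"
    by (simp add: prod_dividef power_add prod.distrib prod.nat_diff_reindex[where g="power q"])
  also have "(\<Prod>i<m. q ^ k) = q ^ (m * k)"
    by (simp add: power_mult mult.commute)
  finally show ?thesis
    using assms by (simp add: prod_zero_iff)
qed

lemma qpoch_q_reversed: "(\<Prod>i<m. 1 - q ^ (m - i)) = qpoch q q m"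
proof -
  have "(\<Prod>i<m. 1 - q ^ (m - i)) = (\<Prod>i<m. 1 - q ^ (m - Suc i) * q)"
    by (intro prod.cong refl) (simp add: Suc_diff_Suc flip: power_Suc2)
  also have "\<dots> = (\<Prod>i<m. 1 - q ^ i * q)"
    by (rule prod.nat_diff_reindex[where g="\<lambda>i. 1 - q ^ i * q"])
  finally show ?thesis by (simp add: qpoch_def mult.commute)
qed

lemma qpoch_shifted: "qpoch (q ^ c * t) q m = (\<Prod>i<m. 1 - q ^ (c + i) * t)"
  by (simp add: qpoch_def power_add mult_ac)

lemma qpoch_power: "qpoch (q ^ c) q m = (\<Prod>i<m. 1 - q ^ (c + i))"
  using qpoch_shifted[of q c 1 m] by simp

theorem mainTheorem8:
  fixes q a1 a2 b0 b1 b2 s1 s2 y1 y2 y3 :: complex and n k :: nat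
  assumes hq0: "q \<noteq> 0" and "cmod q \<noteq> 1"
    and ha2: "a2 \<noteq> 0" and hb2: "b2 \<noteq> 0"
    and "\<And>i j. i \<noteq> j \<Longrightarrow> hh q a1 a2 i \<noteq> hh q a1 a2 j"
    and e1: "y1 + y2 + y3 = q * a1 / a2 - (b0 + s2 / a2) / b2"
    and e2: "y1 * y2 + y1 * y3 + y2 * y3
             = (q * b1 / b2) / q - (q * s1 / a2 + b0 * (q * a1 / a2)) / b2"
    and e3: "y1 * y2 * y3 = (q * a1 / a2) * (q * b1 / b2) / q"
    and hkn: "k \<le> n"
  shows "cc q a1 a2 b0 b1 b2 s1 s2 n k =
           b2 ^ (n - k) / q ^ ((n - k) * k) *
           (qpoch (q ^ (k + 1)) q (n - k) * qpoch (q ^ k * y1) q (n - k)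
            * qpoch (q ^ k * y2) q (n - k) * qpoch (q ^ k * y3) q (n - k))
           / (qpoch q q (n - k) * qpoch ((q * a1 / a2) * q ^ (n + k - 1)) q (n - k))"
proof -
  define m where "m = n - k"
  define z where "z = q * a1 / a2"
  have n: "n = k + m" using hkn by (simp add: m_def)
  have "cc q a1 a2 b0 b1 b2 s1 s2 n k
      = (\<Prod>i<m. b2 * (q ^ (m - Suc i) / q ^ (k + i))
          * ((1 - q ^ (k + 1 + i)) * (1 - q ^ (k + i) * y1) * (1 - q ^ (k + i) * y2) * (1 - q ^ (k + i) * y3))
          / ((1 - q ^ (m - i)) * (1 - q ^ (n + k - 1 + i) * z)))"
    unfolding cc_eq_prod_lessThan[OF hkn] m_def[symmetric]
  proof (rule prod.cong[OF refl], goal_cases)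
    case (1 i)
    then have "k + i < n" "n + (k + i) - 1 = n + k - 1 + i" by (auto simp: n)
    then show ?case
      using gg_hh_ratio_factor[OF hq0 ha2 hb2 e1 e2 e3 \<open>k + i < n\<close>]
      by (simp add: n z_def mult.commute)
  qed
  also have "\<dots> = b2 ^ m * (\<Prod>i<m. q ^ (m - Suc i) / q ^ (k + i))
      * (qpoch (q ^ (k + 1)) q m * qpoch (q ^ k * y1) q m * qpoch (q ^ k * y2) q m * qpoch (q ^ k * y3) q m)
      / ((\<Prod>i<m. 1 - q ^ (m - i)) * qpoch (q ^ (n + k - 1) * z) q m)"
    by (simp only: qpoch_shifted qpoch_power prod_dividef prod.distrib prod_constant card_lessThan
        mult.assoc)
  finally show ?thesis
    unfolding prod_power_diff_over_power[OF hq0] qpoch_q_reversed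
    by (simp add: m_def z_def mult.commute)
qed

end
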